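(* Let $f,g\in\mathbb{Z}[x,y]$ have no common non-constant factor, let $R^{(y)}=\operatorname{res}(f,g;y)$ and $R^{(x)}=\operatorname{res}(f,g;x)$, and let $\alpha$ and $\beta$ be arbitrary real roots of $R^{(y)}$ and $R^{(x)}$, respectively, with discs $\Delta(\alpha),\Delta(\beta)$ and bounds $L(\alpha),L(\beta)$ constructed as in the context. Then: (1) the polydisc $\Delta(\alpha,\beta):=\Delta(\alpha)\times\Delta(\beta)\subset\mathbb{C}^2$ contains at most one common complex zero of $f$ and $g$; if it contains one, then this zero is real and equals $(\alpha,\beta)$; (2) for every point $(z_1,z_2)$ on the boundary of $\Delta(\alpha,\beta)$, $|R^{(y)}(z_1)|>L(\alpha)$ if $z_1\in\partial\Delta(\alpha)$, and $|R^{(x)}(z_2)|>L(\beta)$ if $z_2\in\partial\Delta(\beta)$.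
   Context: Notation: for an interval $I=(a,b)\subset\mathbb{R}$, $m_I=(a+b)/2$, $r_I=(b-a)/2$; $\Delta_r(m)=\{z\in\mathbb{C}:|z-m|<r\}$. For $p\in\mathbb{R}[x]$ and reals $m,r,K$, $T^p_K(m,r)$ means $|p(m)|-K\sum_{k\ge1}\left|\frac{p^{(k)}(m)}{k!}\right|r^k>0$. Construction: write $R^{(y)}=\prod_{i=1}^{\deg R^{(y)}} r_i^{\,i}$ with $r_i\in\mathbb{Z}[x]$ square-free and pairwise coprime. If $\alpha$ is a root of $r_{i_0}$, let $I=I(\alpha)$ be an open real interval containing $\alpha$ such that $T^{(r_{i_0})'}_{3/2}(m_I,8r_I)$ holds and $T^{r_i}_1(m_I,8r_I)$ holds for all $i\neq i_0$; set $\Delta(\alpha):=\Delta_{2r_I}(m_I)$ and $L(\alpha):=2^{-i_0-\deg R^{(y)}}|R^{(y)}(m_I-2r_I)|$. $\Delta(\beta)$, $L(\beta)$ are constructed identically from $R^{(x)}$ and its square-free factorization. *)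

theory Defs
  imports "HOL-Analysis.Analysis" "HOL-Computational_Algebra.Computational_Algebra"
    "Subresultants.Resultant_Prelim"
begin

text \<open>Bivariate integer polynomials f(x,y) are represented as int poly poly:
  the outer variable is y, the coefficients are polynomials in x.\<close>

definition eval2 :: "int poly poly \<Rightarrow> complex \<Rightarrow> complex \<Rightarrow> complex" where
  "eval2 f z1 z2 = poly (map_poly (\<lambda>c. poly (map_poly of_int c) z1) f) z2"

definition swap_xy :: "int poly poly \<Rightarrow> int poly poly" where
  "swap_xy p = (\<Sum>i\<le>degree p. \<Sum>j\<le>degree (coeff p i). monom (monom (coeff (coeff p i) j) i) j)"

definition res_y :: "int poly poly \<Rightarrow> int poly poly \<Rightarrow> int poly" where
  "res_y f g = resultant f g"
definition res_x :: "int poly poly \<Rightarrow> int poly poly \<Rightarrow> int poly" where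
  "res_x f g = resultant (swap_xy f) (swap_xy g)"

definition T_test :: "int poly \<Rightarrow> real \<Rightarrow> real \<Rightarrow> real \<Rightarrow> bool" where
  "T_test p K m r \<longleftrightarrow>
     \<bar>poly (map_poly of_int p) m\<bar>
       - K * (\<Sum>k\<in>{1..degree p}. \<bar>poly ((pderiv ^^ k) (map_poly of_int p)) m / fact k\<bar> * r ^ k) > 0"

definition sqf_factorization :: "int poly \<Rightarrow> (nat \<Rightarrow> int poly) \<Rightarrow> bool" where
  "sqf_factorization R rs \<longleftrightarrow>
     R = (\<Prod>i\<in>{1..degree R}. rs i ^ i) \<and>
     (\<forall>i\<in>{1..degree R}. squarefree (rs i)) \<and>
     (\<forall>i\<in>{1..degree R}. \<forall>j\<in>{1..degree R}. i \<noteq> j \<longrightarrow> coprime (rs i) (rs j))"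

definition admissible_interval ::
  "int poly \<Rightarrow> (nat \<Rightarrow> int poly) \<Rightarrow> nat \<Rightarrow> real \<Rightarrow> real \<Rightarrow> real \<Rightarrow> bool" where
  "admissible_interval R rs i0 \<alpha> a b \<longleftrightarrow>
     a < \<alpha> \<and> \<alpha> < b \<and>
     T_test (pderiv (rs i0)) (3/2) ((a+b)/2) (8 * ((b-a)/2)) \<and>
     (\<forall>i\<in>{1..degree R}. i \<noteq> i0 \<longrightarrow> T_test (rs i) 1 ((a+b)/2) (8 * ((b-a)/2)))"

definition iso_disc :: "real \<Rightarrow> real \<Rightarrow> complex set" where
  "iso_disc a b = ball (complex_of_real ((a+b)/2)) (2 * ((b-a)/2))"

definition iso_bound :: "int poly \<Rightarrow> nat \<Rightarrow> real \<Rightarrow> real \<Rightarrow> real" where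
  "iso_bound R i0 a b =
     inverse (2 ^ (i0 + degree R)) * \<bar>poly (map_poly of_int R) ((a+b)/2 - 2 * ((b-a)/2))\<bar>"

end

theory Submission
  imports Defs
begin

text \<open>Each resultant factors as \<open>R = \<Prod>i. r_i ^ i\<close>. Expand every factor in its Taylor series
  about the centre \<open>m\<close> of \<open>I\<close>; on the closed disc \<open>|z - m| \<le> 2r\<close>, whose radius is a quarter of
  the radius \<open>8r\<close> used in the tests, the test on \<open>r_i\<close> (\<open>i \<noteq> i0\<close>) keeps \<open>r_i\<close> zero-free and
  constant up to a factor \<open>2 ^ deg r_i\<close>, while the test on \<open>r_i0'\<close> makes \<open>r_i0\<close> close to its
  linearisation \<open>r_i0'(m) (z - \<alpha>)\<close>: so \<open>\<alpha>\<close> is the only zero of \<open>r_i0\<close> there and \<open>r_i0\<close> is large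
  on the boundary circle. Multiplying the factor estimates, \<open>\<alpha>\<close> is the only zero of the
  resultant in \<open>\<Delta>(\<alpha>)\<close> and the resultant exceeds \<open>L(\<alpha>)\<close> on the boundary. A common zero of \<open>f\<close>
  and \<open>g\<close> is a zero of both resultants, because the vector of powers of the common root lies in
  the kernel of the Sylvester matrix of the specialised polynomials; hence it is \<open>(\<alpha>, \<beta>)\<close>.\<close>

lemma higher_pderiv_pcompose_linear:
  "(pderiv ^^ k) (pcompose p [:c, 1:]) = pcompose ((pderiv ^^ k) p) [:c, 1:]"
  by (induction k) (simp_all add: pderiv_pcompose pderiv_pCons)

lemma coeff_eq_poly_higher_pderiv_0:
  fixes p :: "'a::field_char_0 poly"
  shows "coeff p k = poly ((pderiv ^^ k) p) 0 / fact k"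
proof -
  have "poly ((pderiv ^^ k) p) 0 = fact k * coeff p k"
    using coeff_higher_pderiv[of k p 0] by (simp add: poly_0_coeff_0 pochhammer_fact)
  then show ?thesis by simp
qed

lemma poly_taylor_expansion:
  fixes p :: "'a::field_char_0 poly"
  shows "poly p (m + h) = (\<Sum>k\<le>degree p. poly ((pderiv ^^ k) p) m / fact k * h ^ k)"
proof -
  define q where "q = pcompose p [:m, 1:]"
  have coeff_q: "coeff q k = poly ((pderiv ^^ k) p) m / fact k" for k
  proof -
    have "poly ((pderiv ^^ k) q) 0 = poly ((pderiv ^^ k) p) m"
      by (simp add: q_def higher_pderiv_pcompose_linear poly_pcompose)
    then show ?thesis by (simp add: coeff_eq_poly_higher_pderiv_0[of q k])
  qed
  have "degree q = degree p"
    by (simp add: q_def degree_pcompose)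
  have "poly p (m + h) = poly q h"
    by (simp add: q_def poly_pcompose add.commute)
  also have "\<dots> = (\<Sum>k\<le>degree q. coeff q k * h ^ k)"
    by (rule poly_altdef)
  also have "\<dots> = (\<Sum>k\<le>degree p. poly ((pderiv ^^ k) p) m / fact k * h ^ k)"
    by (simp add: coeff_q \<open>degree q = degree p\<close>)
  finally show ?thesis .
qed

definition taylor_tail :: "'a::real_normed_field poly \<Rightarrow> 'a \<Rightarrow> real \<Rightarrow> real" where
  "taylor_tail p m \<rho> = (\<Sum>k\<in>{1..degree p}. norm (poly ((pderiv ^^ k) p) m / fact k) * \<rho> ^ k)"

lemma taylor_tail_nonneg: "0 \<le> \<rho> \<Longrightarrow> 0 \<le> taylor_tail p m \<rho>"
  unfolding taylor_tail_def by (intro sum_nonneg) auto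

lemma taylor_tail_degree_0: "degree p = 0 \<Longrightarrow> taylor_tail p m \<rho> = 0"
  by (simp add: taylor_tail_def)

lemma taylor_tail_scale:
  assumes "0 \<le> \<rho>" and "1 \<le> c"
  shows "c * taylor_tail p m \<rho> \<le> taylor_tail p m (c * \<rho>)"
  unfolding taylor_tail_def sum_distrib_left
proof (rule sum_mono)
  fix k assume "k \<in> {1..degree p}"
  then have "c * \<rho> ^ k \<le> (c * \<rho>) ^ k"
    using assms power_increasing[of 1 k c] by (simp add: power_mult_distrib mult_right_mono)
  then show "c * (norm (poly ((pderiv ^^ k) p) m / fact k) * \<rho> ^ k)
      \<le> norm (poly ((pderiv ^^ k) p) m / fact k) * (c * \<rho>) ^ k"
    by (metis mult.left_commute mult_left_mono norm_ge_zero)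
qed

lemma norm_poly_diff_le_taylor_tail:
  fixes p :: "'a::real_normed_field poly"
  assumes "norm (z - m) \<le> \<rho>"
  shows "norm (poly p z - poly p m) \<le> taylor_tail p m \<rho>"
proof -
  have "poly p z - poly p m = (\<Sum>k\<in>{1..degree p}. poly ((pderiv ^^ k) p) m / fact k * (z - m) ^ k)"
    using poly_taylor_expansion[of p m "z - m"] by (simp add: atMost_atLeast0 sum.atLeast_Suc_atMost)
  also have "norm \<dots> \<le> taylor_tail p m \<rho>"
    unfolding taylor_tail_def using assms
    by (intro sum_norm_le)
      (simp only: norm_mult norm_power, auto intro!: mult_left_mono power_mono)
  finally show ?thesis .
qed

lemma norm_sum_power_products_le:
  fixes x y :: "'a::real_normed_field"
  assumes "norm x \<le> \<rho>" and "norm y \<le> \<rho>"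
  shows "norm (\<Sum>i<n. y ^ (n - Suc i) * x ^ i) \<le> of_nat n * \<rho> ^ (n - 1)"
proof -
  have "0 \<le> \<rho>"
    using assms(1) norm_ge_zero order_trans by blast
  have "norm (y ^ (n - Suc i) * x ^ i) \<le> \<rho> ^ (n - 1)" if "i < n" for i
  proof -
    have "norm (y ^ (n - Suc i) * x ^ i) \<le> \<rho> ^ (n - Suc i) * \<rho> ^ i"
      unfolding norm_mult norm_power using assms
      by (intro mult_mono power_mono) (auto simp: \<open>0 \<le> \<rho>\<close>)
    also have "\<dots> = \<rho> ^ (n - 1)"
      using that by (simp flip: power_add)
    finally show ?thesis .
  qed
  then have "norm (\<Sum>i<n. y ^ (n - Suc i) * x ^ i) \<le> (\<Sum>i<n. \<rho> ^ (n - 1))"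
    by (intro sum_norm_le) auto
  then show ?thesis by simp
qed

lemma poly_diff_eq_mult_divided_taylor:
  fixes p :: "'a::field_char_0 poly"
  shows "poly p z - poly p w = (z - w) * (\<Sum>k<degree p. poly ((pderiv ^^ Suc k) p) m / fact (Suc k)
           * (\<Sum>i<Suc k. (w - m) ^ (k - i) * (z - m) ^ i))"
proof -
  define c where "c k = poly ((pderiv ^^ k) p) m / fact k" for k
  define G where "G k = (\<Sum>i<k. (w - m) ^ (k - Suc i) * (z - m) ^ i)" for k
  have "poly p z - poly p w = (\<Sum>k\<le>degree p. c k * ((z - m) ^ k - (w - m) ^ k))"
    using poly_taylor_expansion[of p m "z - m"] poly_taylor_expansion[of p m "w - m"]
    by (simp add: c_def right_diff_distrib sum_subtractf)
  also have "\<dots> = (z - w) * (\<Sum>k\<le>degree p. c k * G k)"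
    unfolding power_diff_sumr2 G_def sum_distrib_left by (simp add: ac_simps)
  also have "(\<Sum>k\<le>degree p. c k * G k) = (\<Sum>k<degree p. c (Suc k) * G (Suc k))"
    by (simp add: sum.atMost_shift G_def)
  finally show ?thesis by (simp add: c_def G_def)
qed

lemma norm_poly_sub_linear_le_taylor_tail:
  fixes p :: "'a::real_normed_field poly"
  assumes root: "poly p \<alpha> = 0" and \<alpha>: "norm (\<alpha> - m) \<le> \<rho>" and z: "norm (z - m) \<le> \<rho>"
  shows "norm (poly p z - poly (pderiv p) m * (z - \<alpha>)) \<le> norm (z - \<alpha>) * taylor_tail (pderiv p) m \<rho>"
proof (cases "degree p")
  case 0
  then obtain c where "p = [:c:]"
    by (meson degree_eq_zeroE)
  with root have "p = 0" by simp
  then show ?thesis by (simp add: taylor_tail_def)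
next
  case (Suc M)
  define d where "d k = poly ((pderiv ^^ k) (pderiv p)) m / fact k" for k
  define e where "e k = poly ((pderiv ^^ Suc k) p) m / fact (Suc k)
    * (\<Sum>i<Suc k. (\<alpha> - m) ^ (k - i) * (z - m) ^ i)" for k
  have higher: "(pderiv ^^ Suc k) p = (pderiv ^^ k) (pderiv p)" for k
    by (simp only: funpow_Suc_right o_def)
  have "poly p z = (z - \<alpha>) * (e 0 + (\<Sum>k<M. e (Suc k)))"
    using poly_diff_eq_mult_divided_taylor[of p z \<alpha> m] root
    unfolding Suc sum.lessThan_Suc_shift e_def by simp
  moreover have "e 0 = poly (pderiv p) m"
    by (simp add: e_def)
  ultimately have eq: "poly p z - poly (pderiv p) m * (z - \<alpha>) = (z - \<alpha>) * (\<Sum>k<M. e (Suc k))"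
    by (simp add: algebra_simps)
  have "norm (e (Suc k)) \<le> norm (d (Suc k)) * \<rho> ^ Suc k" for k
  proof -
    define A where "A = poly ((pderiv ^^ Suc (Suc k)) p) m / fact (Suc (Suc k))"
    define B where "B = (\<Sum>i<Suc (Suc k). (\<alpha> - m) ^ (Suc (Suc k) - Suc i) * (z - m) ^ i)"
    have "norm B \<le> of_nat (Suc (Suc k)) * \<rho> ^ Suc k"
      unfolding B_def using norm_sum_power_products_le[OF z \<alpha>, of "Suc (Suc k)"] by simp
    have "norm (e (Suc k)) = norm A * norm B"
      unfolding e_def A_def B_def diff_Suc_Suc norm_mult ..
    also have "\<dots> \<le> norm A * (of_nat (Suc (Suc k)) * \<rho> ^ Suc k)"
      using \<open>norm B \<le> _\<close> by (rule mult_left_mono) simp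
    also have "norm A * of_nat (Suc (Suc k)) = norm (d (Suc k))"
      unfolding A_def d_def higher[of "Suc k"] norm_divide norm_fact
      by (simp add: fact_Suc[of "Suc k"] del: fact_Suc of_nat_Suc)
    then have "norm A * (of_nat (Suc (Suc k)) * \<rho> ^ Suc k) = norm (d (Suc k)) * \<rho> ^ Suc k"
      by (simp only: mult.assoc [symmetric])
    finally show ?thesis .
  qed
  then have "norm (\<Sum>k<M. e (Suc k)) \<le> (\<Sum>k<M. norm (d (Suc k)) * \<rho> ^ Suc k)"
    by (intro sum_norm_le) auto
  also have "\<dots> = taylor_tail (pderiv p) m \<rho>"
    using Suc by (simp add: taylor_tail_def d_def degree_pderiv sum.atLeast1_atMost_eq)
  finally show ?thesis
    unfolding eq norm_mult by (intro mult_left_mono) auto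
qed

lemma taylor_tail_double_le_quarter:
  "0 \<le> r \<Longrightarrow> taylor_tail p m (2 * r) \<le> taylor_tail p m (8 * r) / 4"
  using taylor_tail_scale[of "2 * r" 4 p m] by simp

lemma norm_poly_disc_lower_bound:
  fixes p :: "'a::real_normed_field poly"
  assumes T: "taylor_tail p m (8 * r) < norm (poly p m)" and "0 \<le> r"
    and z: "norm (z - m) \<le> 2 * r" and w: "norm (w - m) \<le> 2 * r"
  shows "(1/2) ^ degree p * norm (poly p w) \<le> norm (poly p z)"
proof -
  define S where "S = taylor_tail p m (8 * r)"
  have "0 \<le> S"
    unfolding S_def using \<open>0 \<le> r\<close> by (intro taylor_tail_nonneg) simp
  have near: "norm (poly p x - poly p m) \<le> S / 4" if "norm (x - m) \<le> 2 * r" for x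
    using norm_poly_diff_le_taylor_tail[OF that, of p] taylor_tail_double_le_quarter[OF \<open>0 \<le> r\<close>, of p m]
    unfolding S_def by linarith
  have z_ge: "norm (poly p m) - S / 4 \<le> norm (poly p z)"
    using near[OF z] norm_triangle_ineq2[of "poly p m" "poly p z"] by (simp add: norm_minus_commute)
  have w_le: "norm (poly p w) \<le> norm (poly p m) + S / 4"
    using near[OF w] norm_triangle_ineq2[of "poly p w" "poly p m"] by simp
  show ?thesis
  proof (cases "degree p = 0")
    case True
    then have "poly p z = poly p m" "poly p w = poly p m"
      using near[OF z] near[OF w] by (simp_all add: S_def taylor_tail_degree_0)
    then show ?thesis using True by simp
  next
    case False
    have "(1/2) ^ degree p * norm (poly p w) \<le> (1/2) * norm (poly p w)"
      using False power_decreasing[of 1 "degree p" "1/2 :: real"] by (intro mult_right_mono) auto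
    also have "\<dots> \<le> norm (poly p z)"
      using z_ge w_le T \<open>0 \<le> S\<close> unfolding S_def by linarith
    finally show ?thesis .
  qed
qed

lemma poly_nonzero_in_disc:
  fixes p :: "'a::real_normed_field poly"
  assumes "taylor_tail p m (8 * r) < norm (poly p m)" and "0 \<le> r" and "norm (z - m) \<le> 2 * r"
  shows "poly p z \<noteq> 0"
proof -
  have "0 < norm (poly p m)"
    using assms(1) taylor_tail_nonneg[of "8 * r" p m] assms(2) by linarith
  then have "0 < (1/2) ^ degree p * norm (poly p m)"
    by simp
  also have "\<dots> \<le> norm (poly p z)"
    using norm_poly_disc_lower_bound[OF assms, of m] assms(2) by simp
  finally show ?thesis by simp
qed

lemma norm_poly_near_root_bounds:
  fixes p :: "'a::real_normed_field poly"
  assumes root: "poly p \<alpha> = 0" and "0 \<le> r"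
    and \<alpha>: "norm (\<alpha> - m) \<le> 2 * r" and x: "norm (x - m) \<le> 2 * r"
  defines "D \<equiv> norm (poly (pderiv p) m)" and "S \<equiv> taylor_tail (pderiv p) m (8 * r)"
  shows "norm (x - \<alpha>) * (D - S / 4) \<le> norm (poly p x)"
    and "norm (poly p x) \<le> norm (x - \<alpha>) * (D + S / 4)"
proof -
  have "norm (poly p x - poly (pderiv p) m * (x - \<alpha>)) \<le> norm (x - \<alpha>) * (S / 4)"
    using norm_poly_sub_linear_le_taylor_tail[OF root \<alpha> x]
      taylor_tail_double_le_quarter[OF \<open>0 \<le> r\<close>, of "pderiv p" m]
    unfolding S_def by (meson mult_left_mono norm_ge_zero order_trans)
  moreover have "norm (poly (pderiv p) m * (x - \<alpha>)) = norm (x - \<alpha>) * D"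
    by (simp add: D_def norm_mult)
  moreover have "norm (poly (pderiv p) m * (x - \<alpha>)) - norm (poly p x)
      \<le> norm (poly p x - poly (pderiv p) m * (x - \<alpha>))"
    using norm_triangle_ineq2[of "poly (pderiv p) m * (x - \<alpha>)" "poly p x"]
    by (simp add: norm_minus_commute)
  moreover have "norm (poly p x) - norm (poly (pderiv p) m * (x - \<alpha>))
      \<le> norm (poly p x - poly (pderiv p) m * (x - \<alpha>))"
    by (rule norm_triangle_ineq2)
  ultimately show "norm (x - \<alpha>) * (D - S / 4) \<le> norm (poly p x)"
    and "norm (poly p x) \<le> norm (x - \<alpha>) * (D + S / 4)"
    unfolding right_diff_distrib distrib_left by linarith+
qed

lemma poly_root_unique_in_disc:
  fixes p :: "'a::real_normed_field poly"
  assumes T: "3/2 * taylor_tail (pderiv p) m (8 * r) < norm (poly (pderiv p) m)" and "0 \<le> r"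
    and root: "poly p \<alpha> = 0" and \<alpha>: "norm (\<alpha> - m) \<le> 2 * r"
    and z: "norm (z - m) \<le> 2 * r" and "poly p z = 0"
  shows "z = \<alpha>"
proof (rule ccontr)
  assume "z \<noteq> \<alpha>"
  have "0 \<le> taylor_tail (pderiv p) m (8 * r)"
    using \<open>0 \<le> r\<close> by (intro taylor_tail_nonneg) simp
  then have "0 < norm (z - \<alpha>) * (norm (poly (pderiv p) m) - taylor_tail (pderiv p) m (8 * r) / 4)"
    using T \<open>z \<noteq> \<alpha>\<close> by (intro mult_pos_pos) auto
  with norm_poly_near_root_bounds(1)[OF root \<open>0 \<le> r\<close> \<alpha> z] \<open>poly p z = 0\<close> show False
    by simp
qed

lemma half_power_Suc_mult_le:
  fixes D S :: real
  assumes "3/2 * S < D" and "0 \<le> S" and "0 < n" and "n = 1 \<Longrightarrow> S = 0"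
  shows "(1/2) ^ Suc n * (3 * (D + S / 4)) \<le> D - S / 4"
proof (cases "n = 1")
  case True
  then show ?thesis
    using assms by simp
next
  case False
  then have "(1/2::real) ^ Suc n \<le> (1/2) ^ 3"
    using assms(3) by (intro power_decreasing) auto
  then have "(1/2) ^ Suc n * (3 * (D + S / 4)) \<le> 1/8 * (3 * (D + S / 4))"
    using assms(1,2) by (intro mult_right_mono) (auto simp: power3_eq_cube)
  also have "\<dots> \<le> D - S / 4"
    using assms(1,2) by (simp add: field_simps)
  finally show ?thesis .
qed

lemma norm_poly_circle_lower_bound:
  fixes p :: "'a::real_normed_field poly"
  assumes T: "3/2 * taylor_tail (pderiv p) m (8 * r) < norm (poly (pderiv p) m)"
    and root: "poly p \<alpha> = 0" and \<alpha>: "norm (\<alpha> - m) < r"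
    and z: "norm (z - m) = 2 * r" and w: "norm (w - m) \<le> 2 * r"
  shows "(1/2) ^ Suc (degree p) * norm (poly p w) < norm (poly p z)"
proof -
  define D where "D = norm (poly (pderiv p) m)"
  define S where "S = taylor_tail (pderiv p) m (8 * r)"
  define c :: real where "c = (1/2) ^ Suc (degree p)"
  have "0 < r"
    using norm_ge_zero \<alpha> by (rule le_less_trans)
  have "0 \<le> S"
    unfolding S_def using \<open>0 < r\<close> by (intro taylor_tail_nonneg) simp
  have DS: "3/2 * S < D"
    using T unfolding D_def S_def .
  have \<alpha>': "norm (\<alpha> - m) \<le> 2 * r"
    using \<alpha> \<open>0 < r\<close> by simp
  have "r < norm (z - \<alpha>)"
    using norm_triangle_ineq2[of "z - m" "\<alpha> - m"] z \<alpha> by (simp add: algebra_simps)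
  then have "r * (D - S / 4) < norm (z - \<alpha>) * (D - S / 4)"
    using DS \<open>0 \<le> S\<close> by (intro mult_strict_right_mono) auto
  also have "\<dots> \<le> norm (poly p z)"
    using norm_poly_near_root_bounds(1)[OF root _ \<alpha>', of z] z \<open>0 < r\<close>
    unfolding D_def S_def by simp
  finally have z_gt: "r * (D - S / 4) < norm (poly p z)" .
  have "norm (w - \<alpha>) \<le> 3 * r"
    using norm_triangle_ineq[of "w - m" "m - \<alpha>"] w \<alpha> by (simp add: norm_minus_commute)
  then have "norm (w - \<alpha>) * (D + S / 4) \<le> 3 * r * (D + S / 4)"
    using DS \<open>0 \<le> S\<close> by (intro mult_right_mono) auto
  then have w_le: "norm (poly p w) \<le> 3 * r * (D + S / 4)"
    using norm_poly_near_root_bounds(2)[OF root _ \<alpha>' w] \<open>0 < r\<close>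
    unfolding D_def S_def by simp
  have "0 < degree p"
  proof (rule ccontr)
    assume "\<not> 0 < degree p"
    then have "pderiv p = 0"
      by (simp add: pderiv_eq_0_iff)
    then show False
      using DS unfolding D_def S_def by (simp add: taylor_tail_degree_0)
  qed
  moreover have "S = 0" if "degree p = 1"
    using that by (simp add: S_def taylor_tail_degree_0 degree_pderiv)
  ultimately have "c * (3 * (D + S / 4)) \<le> D - S / 4"
    unfolding c_def using DS \<open>0 \<le> S\<close> by (intro half_power_Suc_mult_le)
  then have "c * (3 * r * (D + S / 4)) \<le> r * (D - S / 4)"
    using \<open>0 < r\<close> mult_left_mono[of _ _ r] by (simp add: ac_simps)
  moreover have "c * norm (poly p w) \<le> c * (3 * r * (D + S / 4))"
    using w_le by (intro mult_left_mono) (auto simp: c_def)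
  ultimately show ?thesis
    using z_gt unfolding c_def by linarith
qed

lemma taylor_tail_map_of_real:
  fixes p :: "real poly"
  shows "taylor_tail (map_poly of_real p :: 'a::real_normed_field poly) (of_real m) \<rho> = taylor_tail p m \<rho>"
proof -
  have "poly ((pderiv ^^ k) (map_poly of_real p)) (of_real m :: 'a) = of_real (poly ((pderiv ^^ k) p) m)" for k
    unfolding of_real_hom.map_poly_higher_pderiv[symmetric] by (rule of_real_hom.poly_map_poly)
  then show ?thesis
    by (simp add: taylor_tail_def norm_divide)
qed

lemma of_int_poly_eq_map_of_real: "(of_int_poly p :: 'a::real_algebra_1 poly) = map_poly of_real (of_int_poly p)"
  by (simp add: map_poly_map_poly o_def)

lemma T_test_iff_taylor_tail:
  "T_test p K m r \<longleftrightarrow>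
     K * taylor_tail (of_int_poly p :: complex poly) (of_real m) r < cmod (poly (of_int_poly p) (of_real m))"
proof -
  have "taylor_tail (of_int_poly p :: complex poly) (of_real m) r = taylor_tail (of_int_poly p) m r"
    unfolding of_int_poly_eq_map_of_real[of p, where 'a = complex] by (rule taylor_tail_map_of_real)
  moreover have "poly (of_int_poly p :: complex poly) (of_real m) = of_real (poly (of_int_poly p) m)"
    unfolding of_int_poly_eq_map_of_real[of p, where 'a = complex] by (rule of_real_hom.poly_map_poly)
  ultimately show ?thesis
    by (simp add: T_test_def taylor_tail_def of_int_hom.degree_map_poly_hom)
qed

lemma sylvester_mat_sub_mult_powers:
  fixes p q :: "'a::comm_semiring_1 poly"
  assumes "degree p \<le> m" and "degree q \<le> n" and i: "i < m + n"
  shows "(sylvester_mat_sub m n p q *\<^sub>v vec (m + n) (\<lambda>j. t ^ (m + n - 1 - j))) $ i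
    = (if i < n then t ^ (n - 1 - i) * poly p t else t ^ (m + n - 1 - i) * poly q t)"
proof -
  define L where "L = m + n"
  define F where "F = (if i < n then monom 1 (n - 1 - i) * p else monom 1 (L - 1 - i) * q)"
  have row: "sylvester_mat_sub m n p q $$ (i, j) = coeff F (L - 1 - j)" if "j < L" for j
  proof (cases "i < n")
    case True
    then show ?thesis
      using assms that unfolding F_def L_def sylvester_mat_sub_index[OF i that[unfolded L_def]]
      by (auto simp: coeff_monom_mult coeff_eq_0 not_le intro!: arg_cong[where f = "coeff p"])
  next
    case False
    then show ?thesis
      using assms that unfolding F_def L_def sylvester_mat_sub_index[OF i that[unfolded L_def]]
      by (auto simp: coeff_monom_mult coeff_eq_0 not_le intro!: arg_cong[where f = "coeff q"])
  qed
  have "degree F < L"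
  proof -
    have "degree (monom (1::'a) k * r) \<le> k + degree r" for k r
      using degree_mult_le[of "monom (1::'a) k" r] degree_monom_le[of "1::'a" k] by linarith
    then show ?thesis
      unfolding F_def L_def using i assms by (cases "i < n") (fastforce intro: le_less_trans)+
  qed
  have "(sylvester_mat_sub m n p q *\<^sub>v vec L (\<lambda>j. t ^ (L - 1 - j))) $ i
      = (\<Sum>j<L. coeff F (L - 1 - j) * t ^ (L - 1 - j))"
    using i unfolding L_def
    by (auto simp: scalar_prod_def row[unfolded L_def] lessThan_atLeast0 intro!: sum.cong)
  also have "\<dots> = (\<Sum>k<L. coeff F k * t ^ k)"
    using sum.nat_diff_reindex[of "\<lambda>k. coeff F k * t ^ k" L] by simp
  also have "\<dots> = poly F t"
    unfolding poly_altdef using \<open>degree F < L\<close>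
    by (intro sum.mono_neutral_right) (auto simp: coeff_eq_0)
  finally show ?thesis
    by (simp add: F_def L_def poly_monom)
qed

lemma det_sylvester_mat_sub_common_root:
  fixes p q :: "'a::idom poly"
  assumes "0 < m + n" and "degree p \<le> m" and "degree q \<le> n"
    and "poly p t = 0" and "poly q t = 0"
  shows "det (sylvester_mat_sub m n p q) = 0"
proof -
  define v where "v = vec (m + n) (\<lambda>j. t ^ (m + n - 1 - j))"
  have "v \<noteq> 0\<^sub>v (m + n)"
  proof
    assume "v = 0\<^sub>v (m + n)"
    then have "v $ (m + n - 1) = 0" using assms(1) by simp
    then show False using assms(1) by (simp add: v_def)
  qed
  moreover have "sylvester_mat_sub m n p q *\<^sub>v v = 0\<^sub>v (m + n)"
    using sylvester_mat_sub_mult_powers[OF assms(2,3)] assms(4,5)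
    by (intro eq_vecI) (auto simp: v_def)
  ultimately show ?thesis
    unfolding det_0_iff_vec_prod_zero[OF sylvester_mat_sub_carrier]
    by (intro exI[of _ v]) (simp add: v_def)
qed

lemma resultant_hom_eq_0_if_common_root:
  fixes h :: "'a::comm_ring_1 \<Rightarrow> 'b::idom"
  assumes "comm_ring_hom h" and "0 < degree f + degree g"
    and "poly (map_poly h f) t = 0" and "poly (map_poly h g) t = 0"
  shows "h (resultant f g) = 0"
proof -
  interpret h: comm_ring_hom h by fact
  have "h (resultant f g) = det (map_mat h (sylvester_mat_sub (degree f) (degree g) f g))"
    unfolding resultant_def sylvester_mat_def by (rule h.hom_det[symmetric])
  also have "\<dots> = det (sylvester_mat_sub (degree f) (degree g) (map_poly h f) (map_poly h g))"
    by (simp add: sylvester_mat_sub_map)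
  also have "\<dots> = 0"
    using assms by (intro det_sylvester_mat_sub_common_root degree_map_poly_le) auto
  finally show ?thesis .
qed

lemma degree_sum_pos_if_degree_resultant:
  "degree (resultant f g) \<noteq> 0 \<Longrightarrow> 0 < degree f + degree g"
  by (metis add_is_0 degree_eq_zeroE neq0_conv power_0 resultant_const(1) degree_1)

lemma comm_ring_hom_poly_of_int_poly: "comm_ring_hom (\<lambda>c. poly (of_int_poly c :: 'a::comm_ring_1 poly) x)"
  by unfold_locales (simp_all add: of_int_poly_hom.hom_add of_int_poly_hom.hom_mult)

lemma poly_resultant_eq_0_if_common_zero:
  assumes "eval2 f z1 z2 = 0" and "eval2 g z1 z2 = 0" and "degree (resultant f g) \<noteq> 0"
  shows "poly (of_int_poly (resultant f g)) z1 = 0"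
  using resultant_hom_eq_0_if_common_root[OF comm_ring_hom_poly_of_int_poly[of z1], of f g z2]
    degree_sum_pos_if_degree_resultant[OF assms(3)] assms(1,2)
  unfolding eval2_def by blast

lemma poly_res_y_eq_0_if_common_zero:
  assumes "eval2 f z1 z2 = 0" and "eval2 g z1 z2 = 0" and "degree (res_y f g) \<noteq> 0"
  shows "poly (of_int_poly (res_y f g)) z1 = 0"
  using assms unfolding res_y_def by (rule poly_resultant_eq_0_if_common_zero)

lemma eval2_sum: "eval2 (\<Sum>a\<in>A. F a) x y = (\<Sum>a\<in>A. eval2 (F a) x y)"
proof -
  interpret h: comm_ring_hom "\<lambda>c. poly (of_int_poly c :: complex poly) x"
    by (rule comm_ring_hom_poly_of_int_poly)
  show ?thesis
    unfolding eval2_def h.poly_map_poly_eval_poly by (rule h.eval_poly_sum)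
qed

lemma eval2_monom: "eval2 (monom (monom c i) j) x y = of_int c * x ^ i * y ^ j"
  by (simp add: eval2_def map_poly_monom poly_monom)

lemma sum_of_bivariate_monoms:
  "(\<Sum>i\<le>degree f. \<Sum>j\<le>degree (coeff f i). monom (monom (coeff (coeff f i) j) j) i) = f"
  by (simp flip: monom_sum add: poly_as_sum_of_monoms)

lemma eval2_swap_xy: "eval2 (swap_xy f) y x = eval2 f x y"
proof -
  have "eval2 f x y = eval2 (\<Sum>i\<le>degree f. \<Sum>j\<le>degree (coeff f i). monom (monom (coeff (coeff f i) j) j) i) x y"
    by (simp only: sum_of_bivariate_monoms)
  then show ?thesis
    by (simp add: swap_xy_def eval2_sum eval2_monom mult_ac)
qed

lemma poly_res_x_eq_0_if_common_zero:
  assumes "eval2 f z1 z2 = 0" and "eval2 g z1 z2 = 0" and "degree (res_x f g) \<noteq> 0"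
  shows "poly (of_int_poly (res_x f g)) z2 = 0"
  using poly_resultant_eq_0_if_common_zero[of "swap_xy f" z2 z1 "swap_xy g"] assms
  by (simp add: res_x_def eval2_swap_xy)

lemma prod_power_less_prod_power:
  fixes x y :: "nat \<Rightarrow> real"
  assumes "finite I" and "i0 \<in> I" and "0 < i0"
    and "\<And>i. i \<in> I \<Longrightarrow> 0 \<le> y i"
    and "\<And>i. i \<in> I \<Longrightarrow> i \<noteq> i0 \<Longrightarrow> y i \<le> x i"
    and "\<And>i. i \<in> I \<Longrightarrow> i \<noteq> i0 \<Longrightarrow> 0 < x i"
    and "y i0 < x i0"
  shows "(\<Prod>i\<in>I. y i ^ i) < (\<Prod>i\<in>I. x i ^ i)"
proof -
  have "(\<Prod>i\<in>I - {i0}. y i ^ i) \<le> (\<Prod>i\<in>I - {i0}. x i ^ i)"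
    using assms by (intro prod_mono) (auto intro: power_mono)
  moreover have "0 < (\<Prod>i\<in>I - {i0}. x i ^ i)"
    using assms by (intro prod_pos) auto
  moreover have "y i0 ^ i0 < x i0 ^ i0"
    using assms by (intro power_strict_mono) auto
  moreover have "0 \<le> y i0 ^ i0"
    using assms by simp
  ultimately have "y i0 ^ i0 * (\<Prod>i\<in>I - {i0}. y i ^ i) < x i0 ^ i0 * (\<Prod>i\<in>I - {i0}. x i ^ i)"
    by (meson mult_left_mono mult_strict_right_mono order_le_less_trans)
  then show ?thesis
    using assms(1,2) by (simp add: prod.remove)
qed

locale isolating_interval =
  fixes R :: "int poly" and rs :: "nat \<Rightarrow> int poly" and i0 :: nat and \<alpha> a b :: real
  assumes factorization: "sqf_factorization R rs"
    and i0: "i0 \<in> {1..degree R}"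
    and root: "poly (of_int_poly (rs i0)) \<alpha> = 0"
    and admissible: "admissible_interval R rs i0 \<alpha> a b"
begin

abbreviation mid :: real where "mid \<equiv> (a + b) / 2"
abbreviation rad :: real where "rad \<equiv> (b - a) / 2"

lemma rad_pos: "0 < rad"
  using admissible by (simp add: admissible_interval_def)

lemma root_near_mid: "cmod (of_real \<alpha> - of_real mid) < rad"
proof -
  have "a < \<alpha>" and "\<alpha> < b"
    using admissible by (simp_all add: admissible_interval_def)
  then have "\<bar>\<alpha> - mid\<bar> < rad"
    by (auto simp: abs_less_iff field_simps)
  then show ?thesis
    by (metis norm_of_real of_real_diff)
qed

lemma mem_closure_iso_disc: "z \<in> closure (iso_disc a b) \<longleftrightarrow> cmod (z - of_real mid) \<le> 2 * rad"
  using rad_pos by (simp add: iso_disc_def dist_norm norm_minus_commute)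

lemma mem_frontier_iso_disc: "z \<in> frontier (iso_disc a b) \<longleftrightarrow> cmod (z - of_real mid) = 2 * rad"
  using rad_pos by (simp add: iso_disc_def frontier_ball dist_norm norm_minus_commute)

lemma left_end_mem_closure_iso_disc: "complex_of_real (mid - 2 * rad) \<in> closure (iso_disc a b)"
proof -
  have "cmod (complex_of_real (mid - 2 * rad) - of_real mid) = 2 * rad"
    unfolding of_real_diff[symmetric] norm_of_real using rad_pos by simp
  then show ?thesis
    by (simp add: mem_closure_iso_disc)
qed

lemma R_eq_prod_factors: "R = (\<Prod>i\<in>{1..degree R}. rs i ^ i)"
  using factorization by (simp only: sqf_factorization_def)

lemma factors_nonzero:
  assumes "i \<in> {1..degree R}"
  shows "rs i \<noteq> 0"
proof
  assume "rs i = 0"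
  then have "(\<Prod>j\<in>{1..degree R}. rs j ^ j) = 0"
    using assms by (intro prod_zero) auto
  then have "R = 0"
    by (rule trans[OF R_eq_prod_factors])
  then show False
    using i0 by simp
qed

lemma poly_eq_prod_factors:
  "poly (of_int_poly R :: complex poly) z = (\<Prod>i\<in>{1..degree R}. poly (of_int_poly (rs i)) z ^ i)"
  using arg_cong[OF R_eq_prod_factors, of "\<lambda>p. poly (of_int_poly p :: complex poly) z"]
  by (simp only: of_int_poly_hom.hom_prod of_int_poly_hom.hom_power poly_prod poly_power)

lemma degree_eq_sum_factors: "degree R = (\<Sum>i\<in>{1..degree R}. i * degree (rs i))"
proof -
  have "degree R = degree (\<Prod>i\<in>{1..degree R}. rs i ^ i)"
    using arg_cong[OF R_eq_prod_factors, of degree] .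
  also have "\<dots> = (\<Sum>i\<in>{1..degree R}. i * degree (rs i))"
    using factors_nonzero by (subst degree_prod_sum_eq) (auto simp: degree_power_eq intro!: sum.cong)
  finally show ?thesis .
qed

lemma other_factor_lower_bound:
  assumes "i \<in> {1..degree R}" and "i \<noteq> i0"
    and "z \<in> closure (iso_disc a b)" and "w \<in> closure (iso_disc a b)"
  shows "(1/2) ^ degree (rs i) * cmod (poly (of_int_poly (rs i)) w) \<le> cmod (poly (of_int_poly (rs i)) z)"
proof -
  have "T_test (rs i) 1 mid (8 * rad)"
    using admissible assms(1,2) by (simp add: admissible_interval_def)
  then show ?thesis
    using norm_poly_disc_lower_bound[of "of_int_poly (rs i)" "of_real mid" rad z w] rad_pos assms(3,4)
    by (simp add: T_test_iff_taylor_tail mem_closure_iso_disc of_int_hom.degree_map_poly_hom)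
qed

lemma other_factor_nonzero:
  assumes "i \<in> {1..degree R}" and "i \<noteq> i0" and "z \<in> closure (iso_disc a b)"
  shows "poly (of_int_poly (rs i) :: complex poly) z \<noteq> 0"
proof -
  have "T_test (rs i) 1 mid (8 * rad)"
    using admissible assms(1,2) by (simp add: admissible_interval_def)
  then show ?thesis
    using poly_nonzero_in_disc[of "of_int_poly (rs i)" "of_real mid" rad z] rad_pos assms(3)
    by (simp add: T_test_iff_taylor_tail mem_closure_iso_disc)
qed

lemma root_factor_test:
  "3/2 * taylor_tail (pderiv (of_int_poly (rs i0) :: complex poly)) (of_real mid) (8 * rad)
     < cmod (poly (pderiv (of_int_poly (rs i0) :: complex poly)) (of_real mid))"
  using admissible unfolding admissible_interval_def T_test_iff_taylor_tail
  by (simp add: of_int_hom.map_poly_pderiv)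

lemma complex_root: "poly (of_int_poly (rs i0) :: complex poly) (of_real \<alpha>) = 0"
  using root unfolding of_int_poly_eq_map_of_real[of "rs i0", where 'a = complex]
  by (simp add: of_real_hom.poly_map_poly)

lemma root_factor_root_unique:
  assumes "z \<in> closure (iso_disc a b)" and "poly (of_int_poly (rs i0)) z = 0"
  shows "z = of_real \<alpha>"
  using poly_root_unique_in_disc[OF root_factor_test _ complex_root _ _ assms(2)]
    root_near_mid rad_pos assms(1) by (simp add: mem_closure_iso_disc)

lemma root_factor_frontier_bound:
  assumes "z \<in> frontier (iso_disc a b)" and "w \<in> closure (iso_disc a b)"
  shows "(1/2) ^ Suc (degree (rs i0)) * cmod (poly (of_int_poly (rs i0)) w)
    < cmod (poly (of_int_poly (rs i0)) z)"
  using norm_poly_circle_lower_bound[OF root_factor_test complex_root root_near_mid, of z w] assms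
  by (simp add: mem_closure_iso_disc mem_frontier_iso_disc of_int_hom.degree_map_poly_hom)

theorem zero_in_iso_disc_eq_root:
  assumes "z \<in> iso_disc a b" and "poly (of_int_poly R) z = 0"
  shows "z = of_real \<alpha>"
proof -
  have z: "z \<in> closure (iso_disc a b)"
    using assms(1) closure_subset by blast
  from assms(2) obtain i where i: "i \<in> {1..degree R}" and "poly (of_int_poly (rs i)) z = 0"
    unfolding poly_eq_prod_factors by (auto simp: prod_zero_iff)
  moreover from this have "i = i0"
    using other_factor_nonzero[OF _ _ z] by blast
  ultimately show ?thesis
    using root_factor_root_unique[OF z] by simp
qed

lemma exponent_sum_eq:
  "(\<Sum>i\<in>{1..degree R}. (degree (rs i) + (if i = i0 then 1 else 0)) * i) = i0 + degree R"
proof -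
  have "(\<Sum>i\<in>{1..degree R}. (degree (rs i) + (if i = i0 then 1 else 0)) * i)
      = (\<Sum>i\<in>{1..degree R}. i * degree (rs i) + (if i = i0 then i else 0))"
    by (intro sum.cong) auto
  also have "\<dots> = (\<Sum>i\<in>{1..degree R}. i * degree (rs i)) + i0"
    using i0 by (simp add: sum.distrib sum.delta)
  also have "\<dots> = degree R + i0"
    by (simp only: degree_eq_sum_factors[symmetric])
  finally show ?thesis by simp
qed

theorem iso_bound_less_on_frontier:
  assumes z: "z \<in> frontier (iso_disc a b)"
  shows "iso_bound R i0 a b < cmod (poly (of_int_poly R) z)"
proof -
  define I where "I = {1..degree R}"
  define w where "w = complex_of_real (mid - 2 * rad)"
  have w: "w \<in> closure (iso_disc a b)"
    unfolding w_def by (rule left_end_mem_closure_iso_disc)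
  define e where "e i = degree (rs i) + (if i = i0 then 1 else 0)" for i
  define P where "P i = (of_int_poly (rs i) :: complex poly)" for i
  have z': "z \<in> closure (iso_disc a b)"
    using z by (simp add: mem_closure_iso_disc mem_frontier_iso_disc)
  have "(\<Prod>i\<in>I. ((1/2) ^ e i * cmod (poly (P i) w)) ^ i) < (\<Prod>i\<in>I. cmod (poly (P i) z) ^ i)"
  proof (rule prod_power_less_prod_power)
    show "finite I" "i0 \<in> I" "0 < i0"
      using i0 by (auto simp: I_def)
    show "(1/2) ^ e i * cmod (poly (P i) w) \<le> cmod (poly (P i) z)"
      and "0 < cmod (poly (P i) z)" if "i \<in> I" "i \<noteq> i0" for i
      using other_factor_lower_bound[OF _ _ z' w] other_factor_nonzero[OF _ _ z'] that
      by (simp_all add: I_def P_def e_def)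
    show "(1/2) ^ e i0 * cmod (poly (P i0) w) < cmod (poly (P i0) z)"
      using root_factor_frontier_bound[OF z w] by (simp add: P_def e_def)
  qed simp
  also have "(\<Prod>i\<in>I. cmod (poly (P i) z) ^ i) = cmod (poly (of_int_poly R) z)"
    by (simp add: I_def P_def poly_eq_prod_factors norm_power flip: prod_norm)
  also have "(\<Prod>i\<in>I. ((1/2) ^ e i * cmod (poly (P i) w)) ^ i)
      = (1/2) ^ (\<Sum>i\<in>I. e i * i) * cmod (poly (of_int_poly R) w)"
    by (simp add: I_def P_def poly_eq_prod_factors norm_power power_mult_distrib
        prod.distrib power_mult power_sum flip: prod_norm)
  also have "cmod (poly (of_int_poly R) w) = \<bar>poly (of_int_poly R) (mid - 2 * rad)\<bar>"
    unfolding w_def of_int_poly_eq_map_of_real[of R, where 'a = complex] of_real_hom.poly_map_poly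
      norm_of_real ..
  also have "(1/2) ^ (\<Sum>i\<in>I. e i * i) * \<bar>poly (of_int_poly R) (mid - 2 * rad)\<bar> = iso_bound R i0 a b"
    unfolding I_def e_def exponent_sum_eq iso_bound_def by (simp add: power_one_over inverse_eq_divide)
  finally show ?thesis .
qed

end

theorem theorem3:
  fixes f g :: "int poly poly" and rs ss :: "nat \<Rightarrow> int poly"
    and i0 j0 :: nat and \<alpha> \<beta> a b c d :: real
  assumes no_common: "\<And>h. h dvd f \<Longrightarrow> h dvd g \<Longrightarrow> degree h = 0 \<and> degree (coeff h 0) = 0"
    and fact_y: "sqf_factorization (res_y f g) rs"
    and fact_x: "sqf_factorization (res_x f g) ss"
    and i0: "i0 \<in> {1..degree (res_y f g)}"
    and \<alpha>_root: "poly (map_poly of_int (rs i0)) \<alpha> = 0"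
    and I_\<alpha>: "admissible_interval (res_y f g) rs i0 \<alpha> a b"
    and j0: "j0 \<in> {1..degree (res_x f g)}"
    and \<beta>_root: "poly (map_poly of_int (ss j0)) \<beta> = 0"
    and I_\<beta>: "admissible_interval (res_x f g) ss j0 \<beta> c d"
  shows "(\<forall>p\<in>{(z1, z2). z1 \<in> iso_disc a b \<and> z2 \<in> iso_disc c d
                         \<and> eval2 f z1 z2 = 0 \<and> eval2 g z1 z2 = 0}.
            \<forall>q\<in>{(z1, z2). z1 \<in> iso_disc a b \<and> z2 \<in> iso_disc c d
                         \<and> eval2 f z1 z2 = 0 \<and> eval2 g z1 z2 = 0}. p = q)
       \<and> (\<forall>z1 z2. z1 \<in> iso_disc a b \<and> z2 \<in> iso_disc c d
                  \<and> eval2 f z1 z2 = 0 \<and> eval2 g z1 z2 = 0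
                  \<longrightarrow> z1 = complex_of_real \<alpha> \<and> z2 = complex_of_real \<beta>)
       \<and> (\<forall>z1\<in>frontier (iso_disc a b).
            cmod (poly (map_poly of_int (res_y f g)) z1) > iso_bound (res_y f g) i0 a b)
       \<and> (\<forall>z2\<in>frontier (iso_disc c d).
            cmod (poly (map_poly of_int (res_x f g)) z2) > iso_bound (res_x f g) j0 c d)"
proof -
  interpret Y: isolating_interval "res_y f g" rs i0 \<alpha> a b
    using fact_y i0 \<alpha>_root I_\<alpha> by unfold_locales
  interpret X: isolating_interval "res_x f g" ss j0 \<beta> c d
    using fact_x j0 \<beta>_root I_\<beta> by unfold_locales
  have common_zero: "z1 = of_real \<alpha> \<and> z2 = of_real \<beta>"
    if "z1 \<in> iso_disc a b" "z2 \<in> iso_disc c d" "eval2 f z1 z2 = 0" "eval2 g z1 z2 = 0" for z1 z2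
  proof
    show "z1 = of_real \<alpha>"
      using that i0 by (intro Y.zero_in_iso_disc_eq_root poly_res_y_eq_0_if_common_zero) auto
    show "z2 = of_real \<beta>"
      using that j0 by (intro X.zero_in_iso_disc_eq_root poly_res_x_eq_0_if_common_zero) auto
  qed
  then show ?thesis
    using Y.iso_bound_less_on_frontier X.iso_bound_less_on_frontier by blast
qed

end
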